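(* The mechanism that, given a dataset $D$, outputs $\operatorname{argmax}_{j\in[m-1]}\{h_{(j)}(D)-h_{(j+1)}(D)+Z_j\}$ with $Z_j$ i.i.d. $\mathcal{N}(0,\sigma^2)$ (RNM-Gaussian) satisfies $(\alpha,\frac{2\alpha}{\sigma^2}+\frac{\log m}{\alpha-1})$-RDP for all $\alpha>1$.
   Context: Setting: a dataset consists of users; there are $m$ candidates and each user votes $1$ for an arbitrary subset of candidates; $h_j(D)$ is the number of users voting for candidate $j$. Datasets are neighboring if one is obtained from the other by adding or removing one user. $h_{(1)}\ge\dots\ge h_{(m)}$ are the sorted counts. The Rényi divergence of order $\alpha>1$ is $\mathbb{D}_\alpha(P\|Q)=\frac{1}{\alpha-1}\log\mathbb{E}_{o\sim Q}[(P(o)/Q(o))^\alpha]$; a mechanism is $(\alpha,\epsilon(\alpha))$-RDP if $\mathbb{D}_\alpha(\mathcal{M}(D)\|\mathcal{M}(D'))\le\epsilon(\alpha)$ for all neighbors $D,D'$. *)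

theory Defs
  imports "HOL-Probability.Probability"
begin

text \<open>A dataset is a finite multiset of users; each user is the set of candidates
(from {0..<m}) it votes for.\<close>

type_synonym dataset = "nat set multiset"

definition valid_dataset :: "nat \<Rightarrow> dataset \<Rightarrow> bool" where
  "valid_dataset m D \<longleftrightarrow> (\<forall>S \<in> set_mset D. S \<subseteq> {..<m})"

definition hcount :: "dataset \<Rightarrow> nat \<Rightarrow> nat" where
  "hcount D j = size (filter_mset (\<lambda>S. j \<in> S) D)"

definition neighbors :: "nat \<Rightarrow> dataset \<Rightarrow> dataset \<Rightarrow> bool" where
  "neighbors m D D' \<longleftrightarrow>
     (\<exists>S. S \<subseteq> {..<m} \<and> (D' = D + {#S#} \<or> D = D' + {#S#}))"

text \<open>Sorted counts h_(1) >= ... >= h_(m), 1-indexed.\<close>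
definition hsorted :: "nat \<Rightarrow> dataset \<Rightarrow> nat \<Rightarrow> nat" where
  "hsorted m D j = rev (sort (map (hcount D) [0..<m])) ! (j - 1)"

definition rnm_score :: "nat \<Rightarrow> dataset \<Rightarrow> (nat \<Rightarrow> real) \<Rightarrow> nat \<Rightarrow> real" where
  "rnm_score m D z j = real (hsorted m D j) - real (hsorted m D (j + 1)) + z j"

text \<open>Argmax over [m-1] = {1..m-1}; ties (a null event) broken towards the smallest index.\<close>
definition rnm_argmax :: "nat \<Rightarrow> dataset \<Rightarrow> (nat \<Rightarrow> real) \<Rightarrow> nat" where
  "rnm_argmax m D z =
     (LEAST j. j \<in> {1..m-1} \<and> (\<forall>i \<in> {1..m-1}. rnm_score m D z i \<le> rnm_score m D z j))"

definition noise :: "nat \<Rightarrow> real \<Rightarrow> (nat \<Rightarrow> real) measure" where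
  "noise m \<sigma> = PiM {1..m-1} (\<lambda>_. density lborel (normal_density 0 \<sigma>))"

definition rnm_gauss :: "nat \<Rightarrow> real \<Rightarrow> dataset \<Rightarrow> nat \<Rightarrow> real" where
  "rnm_gauss m \<sigma> D k =
     measure (noise m \<sigma>) {z \<in> space (noise m \<sigma>). rnm_argmax m D z = k}"

definition renyi_div :: "real \<Rightarrow> 'a set \<Rightarrow> ('a \<Rightarrow> real) \<Rightarrow> ('a \<Rightarrow> real) \<Rightarrow> ereal" where
  "renyi_div \<alpha> Out P Q =
     (if \<exists>x \<in> Out. P x > 0 \<and> Q x = 0 then \<infinity>
      else ereal (1 / (\<alpha> - 1) *
        ln (\<Sum>x \<in> {x \<in> Out. Q x > 0}. Q x * (P x / Q x) powr \<alpha>)))"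

definition is_RDP :: "nat \<Rightarrow> 'a set \<Rightarrow> (dataset \<Rightarrow> 'a \<Rightarrow> real) \<Rightarrow> real \<Rightarrow> real \<Rightarrow> bool" where
  "is_RDP m Out M \<alpha> \<epsilon> \<longleftrightarrow>
     (\<forall>D D'. valid_dataset m D \<and> valid_dataset m D' \<and> neighbors m D D' \<longrightarrow>
        renyi_div \<alpha> Out (M D) (M D') \<le> ereal \<epsilon>)"

end

theory Submission
  imports Defs
begin

(*
  Adding or removing one user changes every sorted count h_(j) by at most 1, so every gap
  h_(j) - h_(j+1) moves by at most 1. Hence if index k wins on D with noise z, it still wins
  on a neighbour D' with noise z + 2 e_k. Shifting one N(0, sigma^2) coordinate by 2 reweights
  the noise law by the likelihood ratio g(z_k) = exp ((2 z_k - 2) / sigma^2), so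
  P_D(k) <= integral of g over the event {D' outputs k}. Hoelder's inequality together with
  E[g^alpha] = exp (2 alpha (alpha - 1) / sigma^2) gives
  P_D(k)^alpha <= exp (2 alpha (alpha - 1) / sigma^2) * P_D'(k)^(alpha - 1),
  and summing these m - 1 terms of the Renyi sum yields the bound, as log (m - 1) <= log m.
*)

section \<open>Order statistics and maximisers\<close>

lemma sorted_nth_le_iff:
  fixes ys :: "'a::linorder list"
  assumes "sorted ys" "j < length ys"
  shows "ys ! j \<le> v \<longleftrightarrow> j < length (filter (\<lambda>x. x \<le> v) ys)"
proof
  assume "ys ! j \<le> v"
  then have "{..j} \<subseteq> {i. i < length ys \<and> ys ! i \<le> v}"
    using assms by (auto intro: order_trans[OF sorted_nth_mono[OF assms(1)]])
  then have "card {..j} \<le> card {i. i < length ys \<and> ys ! i \<le> v}"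
    by (intro card_mono) auto
  then show "j < length (filter (\<lambda>x. x \<le> v) ys)"
    by (simp add: length_filter_conv_card)
next
  assume j: "j < length (filter (\<lambda>x. x \<le> v) ys)"
  show "ys ! j \<le> v"
  proof (rule ccontr)
    assume "\<not> ys ! j \<le> v"
    then have "i < j" if "i < length ys" "ys ! i \<le> v" for i
      using sorted_nth_mono[OF assms(1), of j i] that by (meson leI order.trans)
    then have "{i. i < length ys \<and> ys ! i \<le> v} \<subseteq> {..<j}"
      by auto
    then have "card {i. i < length ys \<and> ys ! i \<le> v} \<le> card {..<j}"
      by (intro card_mono) auto
    with j show False by (simp add: length_filter_conv_card)
  qed
qed

lemma sort_nth_le_mono:
  fixes xs ys :: "'a::linorder list"
  assumes "mono f" "length xs = length ys" "j < length xs"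
    and "\<And>i. i < length xs \<Longrightarrow> ys ! i \<le> f (xs ! i)"
  shows "sort ys ! j \<le> f (sort xs ! j)"
proof -
  define v where "v = sort xs ! j"
  have "j < length (filter (\<lambda>x. x \<le> v) (sort xs))"
    using sorted_nth_le_iff[of "sort xs" j v] assms by (simp add: v_def)
  also have "\<dots> = length (filter (\<lambda>x. x \<le> v) xs)"
    by (metis filter_sort length_sort)
  also have "\<dots> \<le> length (filter (\<lambda>x. x \<le> f v) ys)"
    unfolding length_filter_conv_card using assms order_trans[OF assms(4) monoD[OF assms(1)]]
    by (intro card_mono) auto
  also have "\<dots> = length (filter (\<lambda>x. x \<le> f v) (sort ys))"
    by (metis filter_sort length_sort)
  finally show ?thesis
    using sorted_nth_le_iff[of "sort ys" j "f v"] assms by (simp add: v_def)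
qed

definition least_argmax :: "'a::wellorder set \<Rightarrow> ('a \<Rightarrow> 'b::linorder) \<Rightarrow> 'a" where
  "least_argmax I s = (LEAST j. j \<in> I \<and> (\<forall>i\<in>I. s i \<le> s j))"

lemma least_argmax_eq_iff:
  assumes "finite I" "I \<noteq> {}"
  shows "least_argmax I s = k \<longleftrightarrow>
    k \<in> I \<and> (\<forall>i\<in>I. s i \<le> s k) \<and> (\<forall>j\<in>I. j < k \<longrightarrow> (\<exists>i\<in>I. s j < s i))"
proof -
  let ?P = "\<lambda>j. j \<in> I \<and> (\<forall>i\<in>I. s i \<le> s j)"
  have "Max (s ` I) \<in> s ` I" using assms by simp
  then obtain j where "j \<in> I" "s j = Max (s ` I)" by (metis imageE)
  then have "?P j" using assms by auto
  show ?thesis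
  proof
    assume "least_argmax I s = k"
    then show "k \<in> I \<and> (\<forall>i\<in>I. s i \<le> s k) \<and> (\<forall>j\<in>I. j < k \<longrightarrow> (\<exists>i\<in>I. s j < s i))"
      unfolding least_argmax_def using LeastI[of ?P, OF \<open>?P j\<close>] not_less_Least[of _ ?P]
      by (auto simp: not_le)
  next
    assume "k \<in> I \<and> (\<forall>i\<in>I. s i \<le> s k) \<and> (\<forall>j\<in>I. j < k \<longrightarrow> (\<exists>i\<in>I. s j < s i))"
    then show "least_argmax I s = k"
      unfolding least_argmax_def by (intro Least_equality) (auto simp: not_le[symmetric])
  qed
qed

lemma least_argmax_stable:
  fixes s s' :: "'a::wellorder \<Rightarrow> 'b::linordered_ab_group_add"
  assumes "finite I" "I \<noteq> {}" "least_argmax I s = k"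
    and "\<And>i. i \<in> I \<Longrightarrow> i \<noteq> k \<Longrightarrow> s' i - s' k \<le> s i - s k"
  shows "least_argmax I s' = k"
proof -
  have k: "k \<in> I" "\<forall>i\<in>I. s i \<le> s k" "\<forall>j\<in>I. j < k \<longrightarrow> (\<exists>i\<in>I. s j < s i)"
    using assms(3) least_argmax_eq_iff[OF assms(1,2)] by blast+
  have "s' i \<le> s' k" if "i \<in> I" for i
  proof (cases "i = k")
    case False
    then have "s' i - s' k \<le> s i - s k" using assms(4) that by blast
    also have "\<dots> \<le> 0" using k(2) that by simp
    finally show ?thesis by simp
  qed simp
  moreover have "s' j < s' k" if j: "j \<in> I" "j < k" for j
  proof -
    obtain i where "i \<in> I" "s j < s i" using k(3) j by blast
    then have "s j - s k < 0" using k(2) by (simp add: less_le_trans)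
    moreover have "s' j - s' k \<le> s j - s k" using assms(4) j by blast
    ultimately have "s' j - s' k < 0" by order
    then show ?thesis by simp
  qed
  ultimately show ?thesis
    using least_argmax_eq_iff[OF assms(1,2)] k(1) by blast
qed

section \<open>Product measures with one modified coordinate\<close>

lemma indicator_PiE_eq_prod:
  assumes "finite I" "z \<in> extensional I"
  shows "indicator (PiE I A) z = (\<Prod>i\<in>I. indicator (A i) (z i) :: 'b::comm_semiring_1)"
  using assms by (cases "z \<in> PiE I A") (auto simp: PiE_iff indicator_def intro!: prod_zero)

lemma measurable_PiM_fun_upd:
  assumes "k \<in> I" "f \<in> measurable (M k) (M k)"
  shows "(\<lambda>z. z(k := f (z k))) \<in> measurable (PiM I M) (PiM I M)"
proof (rule measurable_PiM_single')
  fix i assume "i \<in> I"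
  then show "(\<lambda>z. (z(k := f (z k))) i) \<in> measurable (PiM I M) (M i)"
    using assms(1) measurable_compose[OF measurable_component_singleton[OF assms(1), of M] assms(2)]
    by (cases "i = k") auto
qed (use assms in \<open>auto simp: space_PiM PiE_iff intro: measurable_space\<close>)

lemma distr_PiM_fun_upd:
  assumes "finite I" "k \<in> I" "\<And>i. prob_space (M i)" "f \<in> measurable (M k) (M k)"
  shows "distr (PiM I M) (PiM I M) (\<lambda>z. z(k := f (z k))) = PiM I (M(k := distr (M k) (M k) f))"
proof -
  let ?M' = "M(k := distr (M k) (M k) f)"
  have "prob_space (?M' i)" for i
    using assms(3,4) by (simp add: prob_space.prob_space_distr)
  then interpret product_sigma_finite ?M'
    by (simp add: product_sigma_finite_def prob_space_imp_sigma_finite)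
  interpret M: product_sigma_finite M
    using assms(3) by (simp add: product_sigma_finite_def prob_space_imp_sigma_finite)
  show ?thesis
  proof (rule PiM_eqI)
    fix A assume A: "\<And>i. i \<in> I \<Longrightarrow> A i \<in> sets (?M' i)"
    let ?A' = "A(k := f -` A k \<inter> space (M k))"
    have A_sets: "A i \<in> sets (M i)" if "i \<in> I" for i
      using A[OF that] by (cases "i = k") auto
    then have "x \<in> space (M i)" if "i \<in> I" "x \<in> A i" for i x
      using that sets.sets_into_space by auto
    then have "(\<lambda>z. z(k := f (z k))) -` PiE I A \<inter> space (PiM I M) = PiE I ?A'"
      using assms(2) by (auto simp: space_PiM PiE_iff extensional_def split: if_splits) metis
    moreover have "PiE I A \<in> sets (PiM I M)"
      using A_sets by (intro sets_PiM_I_finite) (auto simp: assms(1))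
    ultimately have "emeasure (distr (PiM I M) (PiM I M) (\<lambda>z. z(k := f (z k)))) (PiE I A)
        = emeasure (PiM I M) (PiE I ?A')"
      by (simp add: emeasure_distr[OF measurable_PiM_fun_upd[where M = M, OF assms(2,4)]])
    also have "\<dots> = (\<Prod>i\<in>I. emeasure (M i) (?A' i))"
      using A_sets assms(4) by (intro M.emeasure_PiM) (auto simp: assms(1))
    also have "\<dots> = (\<Prod>i\<in>I. emeasure (?M' i) (A i))"
      using A_sets assms(2,4) by (intro prod.cong) (auto simp: emeasure_distr)
    finally show "emeasure (distr (PiM I M) (PiM I M) (\<lambda>z. z(k := f (z k)))) (PiE I A)
        = (\<Prod>i\<in>I. emeasure (?M' i) (A i))" .
  next
    show "sets (distr (PiM I M) (PiM I M) (\<lambda>z. z(k := f (z k)))) = sets (PiM I ?M')"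
      by (simp, rule sets_PiM_cong) auto
  qed (simp add: assms(1))
qed

lemma density_PiM_component:
  assumes "finite I" "k \<in> I" "\<And>i. prob_space (M i)" "g \<in> borel_measurable (M k)"
    and "prob_space (density (M k) g)"
  shows "density (PiM I M) (\<lambda>z. g (z k)) = PiM I (M(k := density (M k) g))"
proof -
  let ?M' = "M(k := density (M k) g)"
  have "prob_space (?M' i)" for i
    using assms(3,5) by simp
  then interpret product_sigma_finite ?M'
    by (simp add: product_sigma_finite_def prob_space_imp_sigma_finite)
  interpret M: product_sigma_finite M
    using assms(3) by (simp add: product_sigma_finite_def prob_space_imp_sigma_finite)
  have g_component: "(\<lambda>z. g (z k)) \<in> borel_measurable (PiM I M)"
    using measurable_compose[OF measurable_component_singleton[OF assms(2), of M] assms(4)] .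
  show ?thesis
  proof (rule PiM_eqI)
    fix A assume A: "\<And>i. i \<in> I \<Longrightarrow> A i \<in> sets (?M' i)"
    have A_sets: "A i \<in> sets (M i)" if "i \<in> I" for i
      using A[OF that] by (cases "i = k") auto
    define f where "f i x = (if i = k then g x else 1) * indicator (A i) x" for i x
    have "emeasure (density (PiM I M) (\<lambda>z. g (z k))) (PiE I A)
        = (\<integral>\<^sup>+ z. g (z k) * indicator (PiE I A) z \<partial>PiM I M)"
      using A_sets g_component assms(1) by (subst emeasure_density) (auto intro: sets_PiM_I_finite)
    also have "\<dots> = (\<integral>\<^sup>+ z. (\<Prod>i\<in>I. f i (z i)) \<partial>PiM I M)"
    proof (rule nn_integral_cong)
      fix z assume "z \<in> space (PiM I M)"
      then have "z \<in> extensional I" by (simp add: space_PiM PiE_iff)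
      then show "g (z k) * indicator (PiE I A) z = (\<Prod>i\<in>I. f i (z i))"
        using assms(1,2) by (simp add: f_def prod.distrib indicator_PiE_eq_prod)
    qed
    also have "\<dots> = (\<Prod>i\<in>I. integral\<^sup>N (M i) (f i))"
    proof (rule M.product_nn_integral_prod[OF assms(1)])
      fix i assume "i \<in> I"
      note [measurable] = A_sets[OF this] A_sets[OF assms(2)] assms(4)
      show "f i \<in> borel_measurable (M i)"
        unfolding f_def by (cases "i = k") simp_all
    qed
    also have "\<dots> = (\<Prod>i\<in>I. emeasure (?M' i) (A i))"
      using A_sets assms(4) by (intro prod.cong) (auto simp: f_def[abs_def] emeasure_density)
    finally show "emeasure (density (PiM I M) (\<lambda>z. g (z k))) (PiE I A)
        = (\<Prod>i\<in>I. emeasure (?M' i) (A i))" .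
  next
    show "sets (density (PiM I M) (\<lambda>z. g (z k))) = sets (PiM I ?M')"
      by (simp, rule sets_PiM_cong) auto
  qed (simp add: assms(1))
qed

section \<open>Gaussian likelihood ratios and a Hoelder bound\<close>

definition normal_shift_ratio :: "real \<Rightarrow> real \<Rightarrow> real \<Rightarrow> real" where
  "normal_shift_ratio a \<sigma> x = exp ((2 * a * x - a\<^sup>2) / (2 * \<sigma>\<^sup>2))"

lemma borel_measurable_normal_shift_ratio[measurable]:
  "normal_shift_ratio a \<sigma> \<in> borel_measurable borel"
  unfolding normal_shift_ratio_def by measurable

lemma normal_shift_ratio_pos: "0 < normal_shift_ratio a \<sigma> x"
  by (simp add: normal_shift_ratio_def)

lemma normal_density_mult_shift_ratio_powr:
  "normal_density 0 \<sigma> x * normal_shift_ratio a \<sigma> x powr p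
     = exp (p * (p - 1) * a\<^sup>2 / (2 * \<sigma>\<^sup>2)) * normal_density (p * a) \<sigma> x"
proof -
  have "- x\<^sup>2 / (2 * \<sigma>\<^sup>2) + p * ((2 * a * x - a\<^sup>2) / (2 * \<sigma>\<^sup>2))
      = (- x\<^sup>2 + p * (2 * a * x - a\<^sup>2)) / (2 * \<sigma>\<^sup>2)"
    by (simp only: add_divide_distrib times_divide_eq_right)
  also have "- x\<^sup>2 + p * (2 * a * x - a\<^sup>2) = p * (p - 1) * a\<^sup>2 - (x - p * a)\<^sup>2"
    by (simp add: power2_eq_square algebra_simps)
  finally have "- x\<^sup>2 / (2 * \<sigma>\<^sup>2) + p * ((2 * a * x - a\<^sup>2) / (2 * \<sigma>\<^sup>2))
      = p * (p - 1) * a\<^sup>2 / (2 * \<sigma>\<^sup>2) + - (x - p * a)\<^sup>2 / (2 * \<sigma>\<^sup>2)"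
    by (simp add: diff_divide_distrib)
  then show ?thesis
    unfolding normal_density_def normal_shift_ratio_def powr_def
    by (simp add: mult_ac flip: exp_add)
qed

lemma normal_density_mult_shift_ratio:
  "normal_density 0 \<sigma> x * normal_shift_ratio a \<sigma> x = normal_density a \<sigma> x"
  using normal_density_mult_shift_ratio_powr[of \<sigma> x a 1] by (simp add: normal_shift_ratio_def)

lemma density_normal_shift_ratio:
  "density (density lborel (normal_density 0 \<sigma>)) (\<lambda>x. ennreal (normal_shift_ratio a \<sigma> x))
     = density lborel (normal_density a \<sigma>)"
  by (subst density_density_eq)
     (auto simp: normal_density_mult_shift_ratio less_imp_le[OF normal_shift_ratio_pos]
           simp flip: ennreal_mult)

lemma nn_integral_normal_shift_ratio_powr:
  assumes "\<sigma> > 0"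
  shows "(\<integral>\<^sup>+ x. ennreal (normal_shift_ratio a \<sigma> x powr p) \<partial>density lborel (normal_density 0 \<sigma>))
       = ennreal (exp (p * (p - 1) * a\<^sup>2 / (2 * \<sigma>\<^sup>2)))"
proof -
  interpret prob_space "density lborel (normal_density (p * a) \<sigma>)"
    using prob_space_normal_density assms by blast
  have "(\<integral>\<^sup>+ x. ennreal (normal_shift_ratio a \<sigma> x powr p) \<partial>density lborel (normal_density 0 \<sigma>))
      = (\<integral>\<^sup>+ x. ennreal (exp (p * (p - 1) * a\<^sup>2 / (2 * \<sigma>\<^sup>2))) * ennreal (normal_density (p * a) \<sigma> x) \<partial>lborel)"
    by (subst nn_integral_density)
       (auto simp: normal_density_mult_shift_ratio_powr
             simp flip: ennreal_mult intro!: nn_integral_cong)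
  also have "\<dots> = ennreal (exp (p * (p - 1) * a\<^sup>2 / (2 * \<sigma>\<^sup>2)))"
    using emeasure_space_1 by (subst nn_integral_cmult) (auto simp: emeasure_density)
  finally show ?thesis .
qed

lemma distr_normal_density_add:
  assumes "\<sigma> > 0"
  shows "distr (density lborel (normal_density \<mu> \<sigma>)) lborel (\<lambda>x. x + a)
       = density lborel (normal_density (\<mu> + a) \<sigma>)"
proof -
  interpret prob_space "density lborel (normal_density \<mu> \<sigma>)"
    using assms by (rule prob_space_normal_density)
  have "distr (density lborel (normal_density \<mu> \<sigma>)) lborel (\<lambda>x. x)
      = distr (density lborel (normal_density \<mu> \<sigma>)) (density lborel (normal_density \<mu> \<sigma>)) (\<lambda>x. x)"
    by (rule distr_cong) auto
  then have "distributed (density lborel (normal_density \<mu> \<sigma>)) lborel (\<lambda>x. x) (normal_density \<mu> \<sigma>)"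
    by (simp add: distributed_def)
  from normal_density_affine[OF this assms, of 1 a] show ?thesis
    by (simp add: distributed_def add.commute)
qed

lemma Youngs_inequality_scaled:
  fixes \<alpha> y c :: real
  assumes "\<alpha> > 1" "y \<ge> 0" "c > 0"
  shows "y \<le> c powr (1 - \<alpha>) / \<alpha> * y powr \<alpha> + (1 - 1 / \<alpha>) * c"
proof -
  have "(y / c) * 1 \<le> (y / c) powr \<alpha> / \<alpha> + 1 powr (\<alpha> / (\<alpha> - 1)) / (\<alpha> / (\<alpha> - 1))"
    using assms by (intro Youngs_inequality) (auto simp: field_simps)
  then have "c * (y / c) \<le> c * ((y / c) powr \<alpha> / \<alpha>) + (1 - 1 / \<alpha>) * c"
    using assms by (simp add: field_simps)
  moreover have "c * ((y / c) powr \<alpha> / \<alpha>) = c powr (1 - \<alpha>) / \<alpha> * y powr \<alpha>"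
    using assms by (simp add: powr_divide powr_diff)
  ultimately show ?thesis using assms by simp
qed

text \<open>The hypothesis is Young's inequality integrated at every scale c; the choice
  c = (E/q) powr (1/\<alpha>) turns it into Hoelder's inequality p \<le> E powr (1/\<alpha>) * q powr (1 - 1/\<alpha>).\<close>
lemma powr_le_of_Young_bounds:
  fixes \<alpha> p q E :: real
  assumes "\<alpha> > 1" "p \<ge> 0" "q \<ge> 0" "E > 0"
    and bound: "\<And>c. c > 0 \<Longrightarrow> p \<le> c powr (1 - \<alpha>) * E / \<alpha> + (1 - 1 / \<alpha>) * c * q"
  shows "p powr \<alpha> \<le> E * q powr (\<alpha> - 1)"
proof (cases "q > 0")
  case True
  define u where "u = exp (ln E / \<alpha> + (1 - 1 / \<alpha>) * ln q)"
  define c where "c = exp ((ln E - ln q) / \<alpha>)"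
  have "c powr (1 - \<alpha>) * E = exp ((1 - \<alpha>) * ((ln E - ln q) / \<alpha>) + ln E)"
    using assms(4) by (simp add: powr_def c_def exp_add)
  also have "\<dots> = u"
    using assms(1) unfolding u_def by (simp add: field_simps)
  finally have u1: "c powr (1 - \<alpha>) * E = u" .
  have "c * q = exp ((ln E - ln q) / \<alpha> + ln q)"
    using True by (simp add: c_def exp_add)
  also have "\<dots> = u"
    using assms(1) unfolding u_def by (simp add: field_simps)
  finally have u2: "c * q = u" .
  have "p \<le> c powr (1 - \<alpha>) * E / \<alpha> + (1 - 1 / \<alpha>) * (c * q)"
    using bound[of c] by (simp add: c_def mult.assoc)
  also have "\<dots> = u"
    unfolding u1 u2 using assms(1) by (simp add: field_simps)
  finally have "p powr \<alpha> \<le> u powr \<alpha>"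
    using assms(1,2) by (intro powr_mono2) auto
  also have "u powr \<alpha> = exp (ln E) * exp ((\<alpha> - 1) * ln q)"
    using assms(1) by (simp add: powr_def u_def mult_exp_exp field_simps)
  also have "\<dots> = E * q powr (\<alpha> - 1)"
    using True assms(4) by (simp add: powr_def)
  finally show ?thesis .
next
  case False
  then have q: "q = 0" using assms(3) by simp
  have "p = 0"
  proof (rule ccontr)
    assume "p \<noteq> 0"
    then have "p > 0" using assms(2) by simp
    define c where "c = exp (ln (\<alpha> * p / (2 * E)) / (1 - \<alpha>))"
    have "c powr (1 - \<alpha>) = \<alpha> * p / (2 * E)"
      using assms(1,4) \<open>p > 0\<close> by (simp add: powr_def c_def)
    then have half: "c powr (1 - \<alpha>) * E / \<alpha> = p / 2"
      using assms(1,4) by (simp add: field_simps)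
    have "c > 0" by (simp add: c_def)
    then have "p \<le> p / 2"
      using bound[of c] unfolding q half by simp
    with \<open>p > 0\<close> show False by simp
  qed
  with q assms(1) show ?thesis by simp
qed

lemma measure_density_powr_le:
  fixes g :: "'a \<Rightarrow> real"
  assumes "finite_measure M" "\<alpha> > 1" "g \<in> borel_measurable M" "\<And>x. 0 \<le> g x"
    and moment: "(\<integral>\<^sup>+ x. ennreal (g x powr \<alpha>) \<partial>M) = ennreal E" and "E > 0" and B: "B \<in> sets M"
  shows "measure (density M g) B powr \<alpha> \<le> E * measure M B powr (\<alpha> - 1)"
proof (rule powr_le_of_Young_bounds[OF assms(2) measure_nonneg measure_nonneg assms(6)])
  interpret finite_measure M by fact
  fix c :: real assume "c > 0"
  define a where "a = c powr (1 - \<alpha>) / \<alpha>"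
  define b where "b = (1 - 1 / \<alpha>) * c"
  have "a \<ge> 0" "b \<ge> 0" using assms(2) \<open>c > 0\<close> by (auto simp: a_def b_def field_simps)
  have "emeasure (density M g) B = (\<integral>\<^sup>+ x. ennreal (g x) * indicator B x \<partial>M)"
    using B assms(3) by (simp add: emeasure_density)
  also have "\<dots> \<le> (\<integral>\<^sup>+ x. ennreal a * ennreal (g x powr \<alpha>) + ennreal b * indicator B x \<partial>M)"
  proof (intro nn_integral_mono)
    fix x
    have "g x \<le> a * g x powr \<alpha> + b"
      using Youngs_inequality_scaled[OF assms(2) assms(4) \<open>c > 0\<close>] by (simp add: a_def b_def)
    then show "ennreal (g x) * indicator B x \<le> ennreal a * ennreal (g x powr \<alpha>) + ennreal b * indicator B x"
      using \<open>a \<ge> 0\<close> \<open>b \<ge> 0\<close> by (auto simp: indicator_def ennreal_plus ennreal_mult simp flip: ennreal_le_iff)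
  qed
  also have "\<dots> = ennreal a * ennreal E + ennreal b * emeasure M B"
    using B assms(3) moment by (subst nn_integral_add) (auto simp: nn_integral_cmult)
  also have "\<dots> = ennreal (a * E + b * measure M B)"
    using \<open>a \<ge> 0\<close> \<open>b \<ge> 0\<close> assms(6) by (simp add: emeasure_eq_measure ennreal_plus ennreal_mult)
  finally have "measure (density M g) B \<le> a * E + b * measure M B"
    unfolding measure_def using \<open>a \<ge> 0\<close> \<open>b \<ge> 0\<close> assms(6) by (intro enn2real_leI) auto
  then show "measure (density M g) B \<le> c powr (1 - \<alpha>) * E / \<alpha> + (1 - 1 / \<alpha>) * c * measure M B"
    by (simp add: a_def b_def)
qed

lemma renyi_div_le_of_powr_le:
  fixes P Q :: "'a \<Rightarrow> real" and C :: real
  assumes "\<alpha> > 1" "finite Out" "\<And>x. x \<in> Out \<Longrightarrow> 0 \<le> P x"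
    and bound: "\<And>x. x \<in> Out \<Longrightarrow> P x powr \<alpha> \<le> C * Q x powr (\<alpha> - 1)"
    and "1 \<le> real (card Out) * C"
  shows "renyi_div \<alpha> Out P Q \<le> ereal (ln (real (card Out) * C) / (\<alpha> - 1))"
proof -
  let ?S = "\<Sum>x \<in> {x \<in> Out. Q x > 0}. Q x * (P x / Q x) powr \<alpha>"
  have "C > 0"
  proof (rule ccontr)
    assume "\<not> C > 0"
    then have "real (card Out) * C \<le> 0" by (simp add: mult_nonneg_nonpos)
    with assms(5) show False by simp
  qed
  have abs_cont: "\<not> (\<exists>x\<in>Out. P x > 0 \<and> Q x = 0)"
    using bound assms(1) by fastforce
  have term_le: "Q x * (P x / Q x) powr \<alpha> \<le> C" if "x \<in> Out" "Q x > 0" for x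
  proof -
    have "Q x * (P x / Q x) powr \<alpha> = P x powr \<alpha> / Q x powr (\<alpha> - 1)"
      using that assms(3) by (simp add: powr_divide powr_diff field_simps)
    also have "\<dots> \<le> C"
      using bound[OF that(1)] that(2) by (simp add: divide_le_eq)
    finally show ?thesis .
  qed
  have "?S \<le> real (card {x \<in> Out. Q x > 0}) * C"
    using term_le by (intro sum_bounded_above) auto
  also have "\<dots> \<le> real (card Out) * C"
    using assms(2) \<open>C > 0\<close> by (intro mult_right_mono) (auto intro: card_mono)
  finally have S_le: "?S \<le> real (card Out) * C" .
  have "ln ?S / (\<alpha> - 1) \<le> ln (real (card Out) * C) / (\<alpha> - 1)"
  proof (cases "?S > 0")
    case True
    then show ?thesis using S_le assms(1) by (intro divide_right_mono) auto
  next
    case False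
    moreover have "?S \<ge> 0" by (intro sum_nonneg) auto
    ultimately have "ln ?S = 0" by simp
    then show ?thesis using assms(1,5) by simp
  qed
  then show ?thesis
    using abs_cont unfolding renyi_div_def by simp
qed

section \<open>Report noisy max with Gaussian noise\<close>

lemma hcount_add_mset: "hcount (add_mset S D) i = hcount D i + (if i \<in> S then 1 else 0)"
  by (simp add: hcount_def)

lemma hsorted_add_mset:
  assumes "j \<in> {1..m}"
  shows "hsorted m D j \<le> hsorted m (add_mset S D) j"
    and "hsorted m (add_mset S D) j \<le> hsorted m D j + 1"
proof -
  let ?xs = "map (hcount D) [0..<m]" and ?ys = "map (hcount (add_mset S D)) [0..<m]"
  have hsorted_eq: "hsorted m D' j = sort (map (hcount D') [0..<m]) ! (m - j)" for D'
    unfolding hsorted_def using assms by (subst rev_nth) (auto simp: Suc_diff_le)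
  have "m - j < m" using assms by auto
  then show "hsorted m D j \<le> hsorted m (add_mset S D) j"
    and "hsorted m (add_mset S D) j \<le> hsorted m D j + 1"
    unfolding hsorted_eq
    using sort_nth_le_mono[of id ?ys ?xs "m - j"] sort_nth_le_mono[of "\<lambda>x. x + 1" ?xs ?ys "m - j"]
    by (simp_all add: mono_def hcount_add_mset)
qed

definition gap :: "nat \<Rightarrow> dataset \<Rightarrow> nat \<Rightarrow> real" where
  "gap m D j = real (hsorted m D j) - real (hsorted m D (j + 1))"

lemma gap_add_mset:
  assumes "j \<in> {1..m-1}"
  shows "\<bar>gap m (add_mset S D) j - gap m D j\<bar> \<le> 1"
proof -
  have "j \<in> {1..m}" "j + 1 \<in> {1..m}" using assms by auto
  then have "real (hsorted m D i) \<le> real (hsorted m (add_mset S D) i)"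
    "real (hsorted m (add_mset S D) i) \<le> real (hsorted m D i + 1)" if "i \<in> {j, j + 1}" for i
    using that hsorted_add_mset[where j = i and D = D and S = S and m = m] by auto
  then show ?thesis
    unfolding gap_def abs_le_iff by fastforce
qed

lemma gap_neighbors:
  assumes "neighbors m D D'" "j \<in> {1..m-1}"
  shows "\<bar>gap m D' j - gap m D j\<bar> \<le> 1"
proof -
  obtain S where "D' = add_mset S D \<or> D = add_mset S D'"
    using assms(1) by (auto simp: neighbors_def)
  then show ?thesis
    using gap_add_mset[OF assms(2)] by (auto simp: abs_minus_commute)
qed

lemma rnm_argmax_eq_least_argmax: "rnm_argmax m D z = least_argmax {1..m-1} (rnm_score m D z)"
  by (simp add: rnm_argmax_def least_argmax_def)

lemma rnm_score_eq_gap: "rnm_score m D z j = gap m D j + z j"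
  by (simp add: rnm_score_def gap_def)

lemma rnm_argmax_in_range:
  assumes "m \<ge> 2"
  shows "rnm_argmax m D z \<in> {1..m-1}"
  using least_argmax_eq_iff[of "{1..m-1}" "rnm_score m D z" "rnm_argmax m D z"] assms
  unfolding rnm_argmax_eq_least_argmax by auto

text \<open>Each gap moves by at most 1, so the lead of k over any competitor shrinks by at most 2.\<close>
lemma rnm_argmax_neighbors_shift:
  assumes "m \<ge> 2" "neighbors m D D'" "rnm_argmax m D z = k"
  shows "rnm_argmax m D' (z(k := z k + 2)) = k"
proof -
  let ?I = "{1..m-1}"
  have k: "k \<in> ?I" using rnm_argmax_in_range[OF assms(1)] assms(3) by blast
  have shift: "rnm_score m D' (z(k := z k + 2)) i - rnm_score m D' (z(k := z k + 2)) k
      \<le> rnm_score m D z i - rnm_score m D z k" if "i \<in> ?I" "i \<noteq> k" for i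
  proof -
    have "gap m D' i \<le> gap m D i + 1" "gap m D k - 1 \<le> gap m D' k"
      using gap_neighbors[OF assms(2) that(1)] gap_neighbors[OF assms(2) k] by (simp_all add: abs_le_iff)
    then show ?thesis using that(2) by (simp add: rnm_score_eq_gap)
  qed
  have "least_argmax ?I (rnm_score m D z) = k"
    using assms(3) by (simp add: rnm_argmax_eq_least_argmax)
  moreover have "finite ?I" "?I \<noteq> {}" using assms(1) by auto
  ultimately show ?thesis
    unfolding rnm_argmax_eq_least_argmax using least_argmax_stable shift by blast
qed

lemma prob_space_noise: "\<sigma> > 0 \<Longrightarrow> prob_space (noise m \<sigma>)"
  unfolding noise_def by (rule prob_space_PiM) (simp add: prob_space_normal_density)

lemma space_noise: "space (noise m \<sigma>) = PiE {1..m-1} (\<lambda>_. UNIV)"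
  by (simp add: noise_def space_PiM)

lemma noise_component_measurable[measurable]: "(\<lambda>z. z i) \<in> borel_measurable (noise m \<sigma>)"
proof (cases "i \<in> {1..m-1}")
  case True
  then have "(\<lambda>z. z i) \<in> measurable (noise m \<sigma>) (density lborel (normal_density 0 \<sigma>))"
    unfolding noise_def by (rule measurable_component_singleton)
  then show ?thesis
    using measurable_cong_sets[OF refl, of "density lborel (normal_density 0 \<sigma>)" borel] by simp
next
  case False
  then have "z i = undefined" if "z \<in> space (noise m \<sigma>)" for z
    using that by (auto simp: space_noise PiE_iff extensional_def)
  then show ?thesis
    using measurable_cong[of "noise m \<sigma>" "\<lambda>z. z i" "\<lambda>_. undefined" borel] by simp
qed

lemma distr_noise_shift:
  assumes "\<sigma> > 0" "k \<in> {1..m-1}"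
  shows "distr (noise m \<sigma>) (noise m \<sigma>) (\<lambda>z. z(k := z k + a))
       = density (noise m \<sigma>) (\<lambda>z. ennreal (normal_shift_ratio a \<sigma> (z k)))"
proof -
  let ?N = "\<lambda>\<mu>. density lborel (normal_density \<mu> \<sigma>)"
  have "distr (?N 0) (?N 0) (\<lambda>x. x + a) = distr (?N 0) lborel (\<lambda>x. x + a)"
    by (rule distr_cong) auto
  then have "distr (noise m \<sigma>) (noise m \<sigma>) (\<lambda>z. z(k := z k + a)) = PiM {1..m-1} ((\<lambda>_. ?N 0)(k := ?N a))"
    using distr_PiM_fun_upd[of "{1..m-1}" k "\<lambda>_. ?N 0" "\<lambda>x. x + a"] assms
    by (simp add: noise_def prob_space_normal_density distr_normal_density_add)
  also have "\<dots> = density (noise m \<sigma>) (\<lambda>z. ennreal (normal_shift_ratio a \<sigma> (z k)))"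
    using density_PiM_component[of "{1..m-1}" k "\<lambda>_. ?N 0" "\<lambda>x. ennreal (normal_shift_ratio a \<sigma> x)"] assms
    by (simp add: noise_def prob_space_normal_density density_normal_shift_ratio)
  finally show ?thesis .
qed

lemma nn_integral_noise_shift_ratio_powr:
  assumes "\<sigma> > 0" "k \<in> {1..m-1}"
  shows "(\<integral>\<^sup>+ z. ennreal (normal_shift_ratio a \<sigma> (z k) powr p) \<partial>noise m \<sigma>)
       = ennreal (exp (p * (p - 1) * a\<^sup>2 / (2 * \<sigma>\<^sup>2)))"
proof -
  let ?N = "density lborel (normal_density 0 \<sigma>)"
  have "distr (noise m \<sigma>) ?N (\<lambda>z. z k) = ?N"
    unfolding noise_def using assms by (intro distr_PiM_component) (auto simp: prob_space_normal_density)
  moreover have "(\<lambda>z. z k) \<in> measurable (noise m \<sigma>) ?N"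
    unfolding noise_def using assms(2) by (rule measurable_component_singleton)
  ultimately show ?thesis
    using nn_integral_distr[of "\<lambda>z. z k" "noise m \<sigma>" ?N "\<lambda>x. ennreal (normal_shift_ratio a \<sigma> x powr p)"]
      nn_integral_normal_shift_ratio_powr[OF assms(1)]
    by simp
qed

lemma rnm_score_measurable[measurable]: "(\<lambda>z. rnm_score m D z i) \<in> borel_measurable (noise m \<sigma>)"
  unfolding rnm_score_def by measurable

lemma rnm_argmax_measurable: "rnm_argmax m D \<in> measurable (noise m \<sigma>) (count_space UNIV)"
proof -
  have [measurable]: "Measurable.pred (noise m \<sigma>) (\<lambda>z. rnm_score m D z i \<le> rnm_score m D z j)" for i j
    unfolding pred_def by (rule borel_measurable_le) measurable
  show ?thesis
    unfolding rnm_argmax_def by measurable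
qed

lemma rnm_gauss_powr_le:
  assumes "m \<ge> 2" "\<sigma> > 0" "\<alpha> > 1" "neighbors m D D'" "k \<in> {1..m-1}"
  shows "rnm_gauss m \<sigma> D k powr \<alpha> \<le> exp (2 * \<alpha> * (\<alpha> - 1) / \<sigma>\<^sup>2) * rnm_gauss m \<sigma> D' k powr (\<alpha> - 1)"
proof -
  interpret prob_space "noise m \<sigma>" using prob_space_noise[OF assms(2)] .
  let ?\<mu> = "noise m \<sigma>" and ?T = "\<lambda>z. z(k := z k + 2)"
  let ?A = "{z \<in> space ?\<mu>. rnm_argmax m D z = k}" and ?B = "{z \<in> space ?\<mu>. rnm_argmax m D' z = k}"
  let ?g = "\<lambda>z. normal_shift_ratio 2 \<sigma> (z k)"
  have B: "?B \<in> sets ?\<mu>"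
    using rnm_argmax_measurable by measurable
  have T: "?T \<in> measurable ?\<mu> ?\<mu>"
    unfolding noise_def using assms(5) by (intro measurable_PiM_fun_upd) auto
  have "?A \<subseteq> ?T -` ?B \<inter> space ?\<mu>"
    using rnm_argmax_neighbors_shift[OF assms(1,4)] measurable_space[OF T] by auto
  then have "rnm_gauss m \<sigma> D k \<le> measure ?\<mu> (?T -` ?B \<inter> space ?\<mu>)"
    unfolding rnm_gauss_def using B T by (intro finite_measure_mono) auto
  also have "\<dots> = measure (distr ?\<mu> ?\<mu> ?T) ?B"
    using T B by (rule measure_distr[symmetric])
  also have "\<dots> = measure (density ?\<mu> ?g) ?B"
    by (simp add: distr_noise_shift[OF assms(2,5)])
  finally have "rnm_gauss m \<sigma> D k powr \<alpha> \<le> measure (density ?\<mu> ?g) ?B powr \<alpha>"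
    using assms(3) by (intro powr_mono2) (auto simp: rnm_gauss_def)
  also have "\<dots> \<le> exp (2 * \<alpha> * (\<alpha> - 1) / \<sigma>\<^sup>2) * measure ?\<mu> ?B powr (\<alpha> - 1)"
  proof (rule measure_density_powr_le)
    show "(\<integral>\<^sup>+ z. ennreal (?g z powr \<alpha>) \<partial>?\<mu>) = ennreal (exp (2 * \<alpha> * (\<alpha> - 1) / \<sigma>\<^sup>2))"
      using nn_integral_noise_shift_ratio_powr[OF assms(2,5), of 2 \<alpha>] by (simp add: power2_eq_square)
    show "?g \<in> borel_measurable ?\<mu>" by measurable
  qed (use assms B in \<open>auto simp: finite_measure_axioms less_imp_le[OF normal_shift_ratio_pos]\<close>)
  finally show ?thesis by (simp add: rnm_gauss_def)
qed

theorem mainTheorem3: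
  fixes m :: nat and \<sigma> :: real
  assumes "m \<ge> 2" and "\<sigma> > 0"
  shows "\<forall>\<alpha>>1. is_RDP m {1..m-1} (rnm_gauss m \<sigma>) \<alpha>
                 (2 * \<alpha> / \<sigma>\<^sup>2 + ln (real m) / (\<alpha> - 1))"
proof (intro allI impI)
  fix \<alpha> :: real assume "\<alpha> > 1"
  let ?E = "exp (2 * \<alpha> * (\<alpha> - 1) / \<sigma>\<^sup>2)" and ?n = "real (card {1..m-1})"
  have "1 \<le> ?E" "1 \<le> ?n" "?n \<le> real m"
    using assms \<open>\<alpha> > 1\<close> by auto
  then have "1 \<le> ?n * ?E"
    using mult_mono[of 1 ?n 1 ?E] by simp
  have "ln (?n * ?E) / (\<alpha> - 1) = (ln ?n + 2 * \<alpha> * (\<alpha> - 1) / \<sigma>\<^sup>2) / (\<alpha> - 1)"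
    using \<open>1 \<le> ?n\<close> by (subst ln_mult) auto
  also have "\<dots> \<le> 2 * \<alpha> / \<sigma>\<^sup>2 + ln (real m) / (\<alpha> - 1)"
    using \<open>\<alpha> > 1\<close> \<open>1 \<le> ?n\<close> \<open>?n \<le> real m\<close> by (simp add: add_divide_distrib divide_right_mono)
  finally have eps: "ln (?n * ?E) / (\<alpha> - 1) \<le> 2 * \<alpha> / \<sigma>\<^sup>2 + ln (real m) / (\<alpha> - 1)" .
  show "is_RDP m {1..m-1} (rnm_gauss m \<sigma>) \<alpha> (2 * \<alpha> / \<sigma>\<^sup>2 + ln (real m) / (\<alpha> - 1))"
    unfolding is_RDP_def
  proof (intro allI impI, elim conjE)
    fix D D' assume "neighbors m D D'"
    then have "renyi_div \<alpha> {1..m-1} (rnm_gauss m \<sigma> D) (rnm_gauss m \<sigma> D') \<le> ereal (ln (?n * ?E) / (\<alpha> - 1))"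
      using rnm_gauss_powr_le[OF assms \<open>\<alpha> > 1\<close>]
      by (intro renyi_div_le_of_powr_le[OF \<open>\<alpha> > 1\<close> _ _ _ \<open>1 \<le> ?n * ?E\<close>]) (auto simp: rnm_gauss_def)
    with eps show "renyi_div \<alpha> {1..m-1} (rnm_gauss m \<sigma> D) (rnm_gauss m \<sigma> D') \<le> ereal (2 * \<alpha> / \<sigma>\<^sup>2 + ln (real m) / (\<alpha> - 1))"
      by (meson ereal_less_eq(3) order.trans)
  qed
qed

end
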